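(* Let $r \ge 1$ and let $O, E, B \subseteq \mathbb{R}^r$ be axis-aligned bounding boxes. Then \[ \Bigl[\forall o' \in \mathrm{Corners}(O) : \mathrm{MaxDist}(o', E) < \mathrm{MinDist}(o', B)\Bigr] \iff \Bigl[\forall o \in O : \forall e \in E : \forall b \in B : \mathrm{dist}(o, e) < \mathrm{dist}(o, b)\Bigr]. \]
   Context: An axis-aligned bounding box (AABB) in $\mathbb{R}^r$ is a set $M = \prod_{d=1}^r [\check{M}_d, \hat{M}_d]$ with real numbers $\check{M}_d \le \hat{M}_d$ for each $d$; membership $p \in M$ means $\check{M}_d \le p_d \le \hat{M}_d$ for all $d$. $\mathrm{Corners}(M)$ is the set of the $2^r$ vertices of $M$, i.e. the points $c$ with $c_d \in \{\check{M}_d, \hat{M}_d\}$ for every $d$. $\mathrm{dist}$ is the Euclidean distance on $\mathbb{R}^r$. For a point $p$ and an AABB $M$, $\mathrm{MaxDist}(p, M) = \max_{q \in M} \mathrm{dist}(p, q)$ and $\mathrm{MinDist}(p, M) = \min_{q \in M} \mathrm{dist}(p, q)$. *)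

theory Defs
  imports "HOL-Analysis.Analysis"
begin

definition aabb :: "real^'n \<Rightarrow> real^'n \<Rightarrow> (real^'n) set" where
  "aabb lo hi = {p. \<forall>d. lo $ d \<le> p $ d \<and> p $ d \<le> hi $ d}"

definition corners :: "real^'n \<Rightarrow> real^'n \<Rightarrow> (real^'n) set" where
  "corners lo hi = {c. \<forall>d. c $ d = lo $ d \<or> c $ d = hi $ d}"

definition MaxDist :: "real^'n \<Rightarrow> (real^'n) set \<Rightarrow> real" where
  "MaxDist p M = (SUP q\<in>M. dist p q)"

definition MinDist :: "real^'n \<Rightarrow> (real^'n) set \<Rightarrow> real" where
  "MinDist p M = (INF q\<in>M. dist p q)"

end

theory Submission
  imports Defs
begin

text \<open>For fixed \<open>e\<close> and \<open>b\<close>, the condition \<open>dist x e < dist x b\<close> says that \<open>x\<close> lies in an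
  open half-space, because \<open>dist x e\<^sup>2 - dist x b\<^sup>2 = 2 x \<bullet> (b - e) + |e|\<^sup>2 - |b|\<^sup>2\<close> is affine in
  \<open>x\<close>. A linear functional attains its maximum over a box at a corner, so a box lies in the
  half-space iff all its corners do. On the other side, boxes are compact and nonempty, so
  \<open>MaxDist\<close> and \<open>MinDist\<close> are attained, and \<open>MaxDist c E < MinDist c B\<close> says exactly that
  every point of \<open>E\<close> is closer to \<open>c\<close> than every point of \<open>B\<close>.\<close>

lemma aabb_eq_cbox: "aabb lo hi = cbox lo hi"
  unfolding aabb_def by (auto simp: mem_box_cart)

lemma compact_aabb: "compact (aabb lo hi)"
  by (simp add: aabb_eq_cbox)

lemma corners_subset_aabb:
  assumes "\<forall>d. lo $ d \<le> hi $ d"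
  shows "corners lo hi \<subseteq> aabb lo hi"
  using assms unfolding corners_def aabb_def by (auto; metis order.refl)

lemma aabb_nonempty:
  assumes "\<forall>d. lo $ d \<le> hi $ d"
  shows "aabb lo hi \<noteq> {}"
  using corners_subset_aabb[OF assms] unfolding corners_def by blast

lemma dist_le_MaxDist: "bounded M \<Longrightarrow> q \<in> M \<Longrightarrow> dist p q \<le> MaxDist p M"
  unfolding MaxDist_def
  by (intro cSUP_upper bounded_imp_bdd_above bounded_dist_comp[where f="\<lambda>_. p" and g=id, simplified])
    (auto simp: image_constant_conv)

lemma MinDist_le_dist: "q \<in> M \<Longrightarrow> MinDist p M \<le> dist p q"
  unfolding MinDist_def by (rule cINF_lower) (auto intro: bdd_belowI[of _ 0])

lemma MaxDist_attained: "compact M \<Longrightarrow> M \<noteq> {} \<Longrightarrow> MaxDist p M \<in> dist p ` M"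
  unfolding MaxDist_def
  by (intro closed_contains_Sup compact_imp_closed bounded_imp_bdd_above compact_imp_bounded
      compact_continuous_image continuous_intros) auto

lemma MinDist_attained: "compact M \<Longrightarrow> M \<noteq> {} \<Longrightarrow> MinDist p M \<in> dist p ` M"
  unfolding MinDist_def
  by (intro closed_contains_Inf compact_imp_closed bounded_imp_bdd_below compact_imp_bounded
      compact_continuous_image continuous_intros) auto

lemma MaxDist_less_MinDist_iff:
  assumes "compact M" "M \<noteq> {}" "compact N" "N \<noteq> {}"
  shows "MaxDist p M < MinDist p N \<longleftrightarrow> (\<forall>e\<in>M. \<forall>b\<in>N. dist p e < dist p b)"
proof
  assume "MaxDist p M < MinDist p N"
  then show "\<forall>e\<in>M. \<forall>b\<in>N. dist p e < dist p b"
    using dist_le_MaxDist[OF compact_imp_bounded[OF assms(1)]] MinDist_le_dist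
    by (meson le_less_trans less_le_trans)
next
  assume closer: "\<forall>e\<in>M. \<forall>b\<in>N. dist p e < dist p b"
  obtain e b where "e \<in> M" "MaxDist p M = dist p e" "b \<in> N" "MinDist p N = dist p b"
    using MaxDist_attained[OF assms(1,2), of p] MinDist_attained[OF assms(3,4), of p] by blast
  with closer show "MaxDist p M < MinDist p N"
    by simp
qed

lemma dist_less_dist_iff_inner:
  fixes x e b :: "'a::real_inner"
  shows "dist x e < dist x b \<longleftrightarrow> 2 * (x \<bullet> (b - e)) < b \<bullet> b - e \<bullet> e"
proof -
  have "dist x e < dist x b \<longleftrightarrow> (dist x e)\<^sup>2 < (dist x b)\<^sup>2"
    by (metis not_le power_mono_iff zero_le_dist zero_less_numeral)
  also have "\<dots> \<longleftrightarrow> 2 * (x \<bullet> (b - e)) < b \<bullet> b - e \<bullet> e"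
    unfolding dist_norm power2_norm_eq_inner by (simp add: inner_diff inner_commute) linarith
  finally show ?thesis .
qed

lemma inner_le_corner:
  assumes "x \<in> aabb lo hi"
  obtains c where "c \<in> corners lo hi" "x \<bullet> v \<le> c \<bullet> v"
proof
  define c where "c = (\<chi> d. if 0 \<le> v $ d then hi $ d else lo $ d)"
  show "c \<in> corners lo hi"
    unfolding corners_def c_def by auto
  have "x $ d * v $ d \<le> c $ d * v $ d" for d
    using assms unfolding aabb_def c_def
    by (auto intro: mult_right_mono mult_right_mono_neg)
  then show "x \<bullet> v \<le> c \<bullet> v"
    unfolding inner_vec_def by (auto intro: sum_mono)
qed

lemma aabb_closer_iff_corners_closer:
  assumes "\<forall>d. lo $ d \<le> hi $ d"
  shows "(\<forall>x\<in>aabb lo hi. dist x e < dist x b) \<longleftrightarrow> (\<forall>c\<in>corners lo hi. dist c e < dist c b)"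
proof
  assume "\<forall>x\<in>aabb lo hi. dist x e < dist x b"
  then show "\<forall>c\<in>corners lo hi. dist c e < dist c b"
    using corners_subset_aabb[OF assms] by blast
next
  assume corners_closer: "\<forall>c\<in>corners lo hi. dist c e < dist c b"
  show "\<forall>x\<in>aabb lo hi. dist x e < dist x b"
  proof
    fix x assume "x \<in> aabb lo hi"
    then obtain c where c: "c \<in> corners lo hi" "x \<bullet> (b - e) \<le> c \<bullet> (b - e)"
      by (rule inner_le_corner)
    have "2 * (c \<bullet> (b - e)) < b \<bullet> b - e \<bullet> e"
      using corners_closer c(1) dist_less_dist_iff_inner by blast
    with c(2) show "dist x e < dist x b"
      unfolding dist_less_dist_iff_inner by linarith
  qed
qed

theorem theorem4p1:
  fixes Olo Ohi Elo Ehi Blo Bhi :: "real^'n"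
  assumes "\<forall>d. Olo $ d \<le> Ohi $ d"
      and "\<forall>d. Elo $ d \<le> Ehi $ d"
      and "\<forall>d. Blo $ d \<le> Bhi $ d"
  shows "(\<forall>c \<in> corners Olo Ohi. MaxDist c (aabb Elo Ehi) < MinDist c (aabb Blo Bhi))
     \<longleftrightarrow> (\<forall>x \<in> aabb Olo Ohi. \<forall>e \<in> aabb Elo Ehi. \<forall>b \<in> aabb Blo Bhi. dist x e < dist x b)"
proof -
  have "(\<forall>c \<in> corners Olo Ohi. MaxDist c (aabb Elo Ehi) < MinDist c (aabb Blo Bhi))
      \<longleftrightarrow> (\<forall>c \<in> corners Olo Ohi. \<forall>e \<in> aabb Elo Ehi. \<forall>b \<in> aabb Blo Bhi. dist c e < dist c b)"
    using MaxDist_less_MinDist_iff[OF compact_aabb aabb_nonempty[OF assms(2)]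
        compact_aabb aabb_nonempty[OF assms(3)]]
    by blast
  also have "\<dots> \<longleftrightarrow> (\<forall>e \<in> aabb Elo Ehi. \<forall>b \<in> aabb Blo Bhi. \<forall>c \<in> corners Olo Ohi. dist c e < dist c b)"
    by blast
  also have "\<dots> \<longleftrightarrow> (\<forall>e \<in> aabb Elo Ehi. \<forall>b \<in> aabb Blo Bhi. \<forall>x \<in> aabb Olo Ohi. dist x e < dist x b)"
    using aabb_closer_iff_corners_closer[OF assms(1)] by blast
  also have "\<dots> \<longleftrightarrow> (\<forall>x \<in> aabb Olo Ohi. \<forall>e \<in> aabb Elo Ehi. \<forall>b \<in> aabb Blo Bhi. dist x e < dist x b)"
    by blast
  finally show ?thesis .
qed

end
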